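(* Let $A\in P(n)$ and $B=A\circ\bar A$ (so $B_{ij}=|A_{ij}|^2$). Then: (1) there exists a vector $x\in\mathbb R^n$ with nonnegative entries, $\|x\|=1$, such that $\|A\circ xx^*\|_2=I(2,A)$; (2) for any such $x$, letting $J=\{i:x_i\neq0\}$ and $B_J$ the principal submatrix of $B$ indexed by $J$, $x$ is an eigenvector of $B\circ xx^*$ with eigenvalue $I(B_J)$.
   Context: $P(k)$ denotes positive semidefinite complex $k\times k$ matrices, $\circ$ the Hadamard product, $\bar A$ the entrywise complex conjugate, $\|\cdot\|_2$ the Frobenius norm. $I(2,A)=\min\{\|A\circ C\|_2: C\in P(n),\ \|C\|_2=1\}$. For $C\in P(k)$, with $P_k$ the all-ones $k\times k$ matrix, $I(C)=\max\{\lambda\ge0: C-\lambda P_k\ge0\}$. *)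

theory Defs
  imports "HOL-Analysis.Analysis"
begin

definition hadamard :: "complex^'n^'n \<Rightarrow> complex^'n^'n \<Rightarrow> complex^'n^'n" where
  "hadamard A C = (\<chi> i j. A$i$j * C$i$j)"

definition conj_mat :: "complex^'n^'n \<Rightarrow> complex^'n^'n" where
  "conj_mat A = (\<chi> i j. cnj (A$i$j))"

definition psd_on :: "'n::finite set \<Rightarrow> complex^'n^'n \<Rightarrow> bool" where
  "psd_on J M \<longleftrightarrow> (\<forall>i\<in>J. \<forall>j\<in>J. M$j$i = cnj (M$i$j)) \<and>
     (\<forall>v::complex^'n. 0 \<le> Re (\<Sum>i\<in>J. \<Sum>j\<in>J. cnj (v$i) * M$i$j * v$j))"

definition psd :: "complex^'n::finite^'n \<Rightarrow> bool" where
  "psd M \<longleftrightarrow> psd_on UNIV M"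

definition frob :: "complex^'n::finite^'n \<Rightarrow> real" where
  "frob M = sqrt (\<Sum>i\<in>UNIV. \<Sum>j\<in>UNIV. (cmod (M$i$j))^2)"

definition I2 :: "complex^'n::finite^'n \<Rightarrow> real" where
  "I2 A = Inf {frob (hadamard A C) | C. psd C \<and> frob C = 1}"

text \<open>I(C_J) = max { lambda >= 0 : C_J - lambda P_{|J|} >= 0 }, for the principal
  submatrix C_J of C indexed by J.\<close>
definition Isub :: "'n::finite set \<Rightarrow> complex^'n^'n \<Rightarrow> real" where
  "Isub J C = Sup {l::real. l \<ge> 0 \<and> psd_on J (\<chi> i j. C$i$j - complex_of_real l)}"

definition outer :: "real^'n \<Rightarrow> complex^'n^'n" where
  "outer x = (\<chi> i j. complex_of_real (x$i * x$j))"

end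

(*
  Let g(x) = ||A o x x^T||_2^2 = sum_ij |A_ij|^2 x_i^2 x_j^2 and B = A o conj A, which is
  positive semidefinite by the Schur product theorem. Every C in P(n) is a sum of rank-one
  matrices w_k w_k^* with pairwise orthogonal w_k, and then
  ||A o C||_2^2 = sum_{k,l} (conj w_k o w_l)^* B (conj w_k o w_l) while ||C||_2^2 = sum_k ||w_k||^4.
  All terms are nonnegative, and the diagonal ones equal g(|w_k|) >= (min g) ||w_k||^4, so
  ||A o C||_2 >= sqrt (min g) for ||C||_2 = 1. Hence I(2,A) is attained at x x^T for a minimiser x
  of g on the unit sphere, which may be taken entrywise nonnegative.

  At such a minimiser, z = x o x minimises z^T B z on the simplex; moving mass between two points
  of the support J shows that the row sums (B z)_i take a common value c on J, which gives
  (B o x x^T) x = c x. Finally c = I(B_J): B_J - c P is positive semidefinite because its form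
  at w equals the form of B at w - (sum w) z, and testing with z shows that no larger value works.

  The spectral decomposition is obtained from the variational characterisation of the largest
  eigenvalue, by induction on the rank.
*)

theory Submission
  imports Defs
begin

subsection \<open>Hermitian forms\<close>

definition cinner :: "complex^'n::finite \<Rightarrow> complex^'n \<Rightarrow> complex" where
  "cinner u w = (\<Sum>i\<in>UNIV. cnj (u$i) * w$i)"

definition hermitian :: "complex^'n::finite^'n \<Rightarrow> bool" where
  "hermitian M \<longleftrightarrow> (\<forall>i j. M$j$i = cnj (M$i$j))"

definition quad_form :: "complex^'n::finite^'n \<Rightarrow> complex^'n \<Rightarrow> complex" where
  "quad_form M v = (\<Sum>i\<in>UNIV. \<Sum>j\<in>UNIV. cnj (v$i) * M$i$j * v$j)"

definition rank_one :: "complex^'n::finite \<Rightarrow> complex^'n^'n" where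
  "rank_one w = (\<chi> i j. w$i * cnj (w$j))"

lemma psd_iff_hermitian: "psd M \<longleftrightarrow> hermitian M \<and> (\<forall>v. 0 \<le> Re (quad_form M v))"
  unfolding psd_def psd_on_def hermitian_def quad_form_def by auto

lemma norm_vec_power2: "(norm (x::'a::real_normed_vector^'n))\<^sup>2 = (\<Sum>i\<in>UNIV. (norm (x$i))\<^sup>2)"
  by (simp add: norm_vec_def L2_set_def sum_nonneg)

lemma norm_vec_of_norms: "norm (\<chi> i. norm (x$i)) = norm (x::'a::real_normed_vector^'n)"
  by (simp add: norm_vec_def)

lemma cinner_self: "cinner u u = of_real ((norm u)\<^sup>2)"
  unfolding cinner_def norm_vec_power2 of_real_sum
  by (intro sum.cong refl) (simp add: mult.commute flip: complex_norm_square)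

lemma cinner_commute: "cinner w u = cnj (cinner u w)"
  by (simp add: cinner_def mult.commute)

lemma cinner_zero_left [simp]: "cinner 0 u = 0"
  and cinner_zero_right [simp]: "cinner u 0 = 0"
  by (simp_all add: cinner_def)

lemma cinner_add_left: "cinner (u + v) w = cinner u w + cinner v w"
  and cinner_add_right: "cinner u (v + w) = cinner u v + cinner u w"
  and cinner_diff_left: "cinner (u - v) w = cinner u w - cinner v w"
  and cinner_diff_right: "cinner u (v - w) = cinner u v - cinner u w"
  and cinner_scale_left: "cinner (a *s u) w = cnj a * cinner u w"
  and cinner_scale_right: "cinner u (a *s w) = a * cinner u w"
  by (simp_all add: cinner_def algebra_simps sum.distrib sum_subtractf sum_distrib_left)

lemma cinner_scaleR_left: "cinner (r *\<^sub>R u) w = of_real r * cinner u w"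
  and cinner_scaleR_right: "cinner u (r *\<^sub>R w) = of_real r * cinner u w"
  unfolding cinner_def vector_scaleR_component
  by (simp_all add: scaleR_conv_of_real sum_distrib_left mult_ac)

lemma quad_form_cinner: "quad_form M v = cinner v (M *v v)"
  by (simp add: quad_form_def cinner_def matrix_vector_mult_def sum_distrib_left mult.assoc)

lemma matrix_vector_mult_scale: "M *v (a *s v) = a *s (M *v (v::complex^'n::finite))"
  by (simp add: vec_eq_iff matrix_vector_mult_def sum_distrib_left mult.left_commute)

lemma matrix_vector_mult_scaleR_complex: "M *v (r *\<^sub>R v) = r *\<^sub>R (M *v (v::complex^'n::finite))"
  by (simp add: vec_eq_iff matrix_vector_mult_def scaleR_sum_right)

lemma hermitian_cinner_adjoint:
  assumes "hermitian M"
  shows "cinner u (M *v w) = cinner (M *v u) w"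
proof -
  have M: "cnj (M$j$i) = M$i$j" for i j
    using assms unfolding hermitian_def by (metis complex_cnj_cnj)
  have "cinner u (M *v w) = (\<Sum>i\<in>UNIV. \<Sum>j\<in>UNIV. cnj (u$i) * M$i$j * w$j)"
    by (simp add: cinner_def matrix_vector_mult_def sum_distrib_left mult.assoc)
  also have "\<dots> = (\<Sum>j\<in>UNIV. \<Sum>i\<in>UNIV. cnj (u$i) * M$i$j * w$j)"
    by (rule sum.swap)
  also have "\<dots> = cinner (M *v u) w"
    by (simp add: cinner_def matrix_vector_mult_def sum_distrib_left sum_distrib_right M mult_ac)
  finally show ?thesis .
qed

lemma hermitian_quad_form_real:
  assumes "hermitian M"
  shows "quad_form M v = of_real (Re (quad_form M v))"
proof -
  have "cnj (quad_form M v) = quad_form M v"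
    using hermitian_cinner_adjoint[OF assms, of v v] cinner_commute[of "M *v v" v]
    by (simp add: quad_form_cinner)
  then show ?thesis
    by (metis Reals_cnj_iff complex_is_Real_iff of_real_Re)
qed

lemma quad_form_scaleR: "quad_form M (r *\<^sub>R v) = of_real (r\<^sup>2) * quad_form M v"
  by (simp add: quad_form_cinner matrix_vector_mult_scaleR_complex cinner_scaleR_left
      cinner_scaleR_right power2_eq_square)

lemma quad_form_zero: "quad_form 0 v = 0"
  by (simp add: quad_form_def)

lemma quad_form_add: "quad_form (M + N) v = quad_form M v + quad_form N v"
  by (simp add: quad_form_def distrib_left distrib_right sum.distrib)

lemma quad_form_rank_one: "quad_form (rank_one w) v = of_real ((cmod (cinner v w))\<^sup>2)"
proof -
  have "quad_form (rank_one w) v = cinner v w * cinner w v"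
    unfolding quad_form_def rank_one_def cinner_def sum_product by (simp add: mult_ac)
  then show ?thesis
    by (simp add: cinner_commute[of w v] flip: complex_norm_square)
qed

lemma rank_one_mult_vec: "rank_one w *v u = cinner w u *s w"
  by (simp add: vec_eq_iff rank_one_def matrix_vector_mult_def cinner_def sum_distrib_left mult_ac)

lemma mat_mult_vec: "mat c *v v = c *s (v::'a::semiring_1^'n::finite)"
  by (simp add: vec_eq_iff matrix_vector_mult_def mat_def if_distrib if_distribR cong: if_cong)

subsection \<open>Spectral decomposition of positive semidefinite matrices\<close>

lemma quadratic_nonneg_near_0_imp_linear_coeff_0:
  fixes a b e :: real
  assumes "0 < e" and "\<And>t. \<bar>t\<bar> < e \<Longrightarrow> 0 \<le> a * t + b * t\<^sup>2"
  shows "a = 0"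
proof (rule DERIV_local_min)
  show "((\<lambda>t. a * t + b * t\<^sup>2) has_real_derivative a) (at 0)"
    by (auto intro!: derivative_eq_intros)
qed (use assms in auto)

lemma psd_quad_form_eq_0_imp_mult_eq_0:
  assumes "psd D" and "quad_form D v = 0"
  shows "D *v v = 0"
proof -
  have herm: "hermitian D" and nonneg: "\<And>u. 0 \<le> Re (quad_form D u)"
    using assms(1) by (auto simp: psd_iff_hermitian)
  define p where "p = D *v v"
  have "quad_form D (v + t *\<^sub>R p)
      = of_real (2 * t * (norm p)\<^sup>2) + of_real (t\<^sup>2) * quad_form D p" for t
  proof -
    have "cinner v (D *v p) = cinner p p"
      by (simp add: hermitian_cinner_adjoint[OF herm] p_def)
    then show ?thesis
      using assms(2)
      by (simp add: quad_form_cinner matrix_vector_right_distrib matrix_vector_mult_scaleR_complex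
          cinner_add_left cinner_add_right cinner_scaleR_left cinner_scaleR_right cinner_self
          p_def power2_eq_square algebra_simps)
  qed
  then have "0 \<le> (2 * (norm p)\<^sup>2) * t + Re (quad_form D p) * t\<^sup>2" for t
    using nonneg[of "v + t *\<^sub>R p"] by (simp add: mult_ac)
  then have "2 * (norm p)\<^sup>2 = 0"
    by (intro quadratic_nonneg_near_0_imp_linear_coeff_0[of 1]) auto
  then show ?thesis
    by (simp add: p_def)
qed

lemma psd_quad_form_eq_0_imp_eq_0:
  assumes "psd C" and "\<And>u. quad_form C u = 0"
  shows "C = 0"
proof -
  have "C *v u = 0 *v u" for u
    using psd_quad_form_eq_0_imp_mult_eq_0[OF assms] by simp
  then show ?thesis
    using matrix_eq by blast
qed

lemma hermitian_diff: "hermitian M \<Longrightarrow> hermitian N \<Longrightarrow> hermitian (M - N)"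
  unfolding hermitian_def vector_minus_component complex_cnj_diff
  by (intro allI arg_cong2[where f=minus]) blast+

lemma hermitian_rank_one: "hermitian (rank_one w)"
  by (simp add: hermitian_def rank_one_def mult.commute)

lemma quad_form_mat_diff: "quad_form (mat c - C) u = c * of_real ((norm u)\<^sup>2) - quad_form C u"
  unfolding quad_form_cinner matrix_vector_mult_diff_rdistrib mat_mult_vec cinner_diff_right
    cinner_scale_right cinner_self ..

lemma rayleigh_max_imp_eigenvector:
  assumes "hermitian C" and "\<And>u. Re (quad_form C u) \<le> \<mu> * (norm u)\<^sup>2"
    and "norm v = 1" and "Re (quad_form C v) = \<mu>"
  shows "C *v v = of_real \<mu> *s v"
proof -
  let ?D = "mat (of_real \<mu>) - C"
  have "hermitian ?D"
    by (intro hermitian_diff assms(1)) (simp add: hermitian_def mat_def)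
  moreover have "0 \<le> Re (quad_form ?D u)" for u
    using assms(2)[of u] by (simp add: quad_form_mat_diff)
  ultimately have "psd ?D"
    by (simp add: psd_iff_hermitian)
  moreover have "quad_form ?D v = 0"
    using hermitian_quad_form_real[OF assms(1), of v] assms(3,4) by (simp add: quad_form_mat_diff)
  ultimately have "?D *v v = 0"
    by (rule psd_quad_form_eq_0_imp_mult_eq_0)
  then show ?thesis
    by (simp add: matrix_vector_mult_diff_rdistrib mat_mult_vec)
qed

lemma psd_nonzero_has_pos_eigenvector:
  assumes "psd C" and "C \<noteq> 0"
  obtains v \<mu> where "norm v = 1" "0 < \<mu>" "C *v v = of_real \<mu> *s v"
proof -
  have herm: "hermitian C" and nonneg: "\<And>u. 0 \<le> Re (quad_form C u)"
    using assms(1) by (auto simp: psd_iff_hermitian)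
  have cont: "continuous_on (sphere 0 1) (\<lambda>u. Re (quad_form C u))"
    unfolding quad_form_def by (intro continuous_intros)
  obtain v where v: "v \<in> sphere 0 1"
    and max: "\<And>u. u \<in> sphere 0 1 \<Longrightarrow> Re (quad_form C u) \<le> Re (quad_form C v)"
    using continuous_attains_sup[OF compact_sphere _ cont] by auto
  define \<mu> where "\<mu> = Re (quad_form C v)"
  have bound: "Re (quad_form C u) \<le> \<mu> * (norm u)\<^sup>2" for u
  proof (cases "u = 0")
    case False
    have "Re (quad_form C ((1 / norm u) *\<^sub>R u)) \<le> \<mu>"
      using False max by (simp add: \<mu>_def)
    with False show ?thesis
      by (simp add: quad_form_scaleR field_simps)
  qed (simp add: quad_form_def)
  have "0 < \<mu>"
  proof (rule ccontr)
    assume "\<not> 0 < \<mu>"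
    have "quad_form C u = 0" for u
    proof -
      have "\<mu> * (norm u)\<^sup>2 \<le> 0"
        using \<open>\<not> 0 < \<mu>\<close> by (simp add: mult_nonpos_nonneg)
      then have "Re (quad_form C u) = 0"
        using bound[of u] nonneg[of u] by linarith
      then show ?thesis
        using hermitian_quad_form_real[OF herm, of u] by simp
    qed
    then show False
      using assms psd_quad_form_eq_0_imp_eq_0 by blast
  qed
  moreover have "C *v v = of_real \<mu> *s v"
    using v by (intro rayleigh_max_imp_eigenvector[OF herm bound]) (simp_all add: \<mu>_def)
  ultimately show ?thesis
    using v that by simp
qed

lemma psd_deflate:
  assumes psd: "psd C" and v: "norm v = 1" and eigen: "C *v v = of_real \<mu> *s v" and "0 \<le> \<mu>"
  defines "C' \<equiv> C - rank_one (sqrt \<mu> *\<^sub>R v)"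
  shows "C' *v u = C *v (u - cinner v u *s v)" and "cinner v (C' *v u) = 0" and "psd C'"
proof -
  have sqrt_sq: "of_real (sqrt \<mu>) * of_real (sqrt \<mu>) = (of_real \<mu> :: complex)"
    using \<open>0 \<le> \<mu>\<close> by (simp flip: of_real_mult)
  show mult: "C' *v u = C *v (u - cinner v u *s v)" for u
    unfolding C'_def matrix_vector_mult_diff_rdistrib matrix_vector_mult_diff_distrib
      rank_one_mult_vec matrix_vector_mult_scale eigen cinner_scaleR_left
    by (simp add: vec_eq_iff) (simp add: scaleR_conv_of_real sqrt_sq mult_ac)
  have cvv: "cinner v v = 1"
    by (simp add: cinner_self v)
  have herm: "hermitian C'"
    unfolding C'_def using psd by (intro hermitian_diff hermitian_rank_one) (simp add: psd_iff_hermitian)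
  have "C' *v v = 0"
    using mult[of v] by (simp add: cvv)
  then show "cinner v (C' *v u) = 0" for u
    using hermitian_cinner_adjoint[OF herm, of v u] by simp
  have "0 \<le> Re (quad_form C' u)" for u
  proof -
    define a where "a = cinner v u"
    define u' where "u' = u - a *s v"
    have "cinner v u' = 0"
      by (simp add: u'_def a_def cinner_diff_right cinner_scale_right cvv)
    then have "cinner v (C *v u') = 0"
      using hermitian_cinner_adjoint[of C v u'] psd
      by (simp add: psd_iff_hermitian eigen cinner_scale_left)
    then have "quad_form C' u = quad_form C u'"
      unfolding quad_form_cinner mult
      by (simp add: u'_def a_def cinner_diff_left cinner_scale_left)
    then show ?thesis
      using psd by (simp add: psd_iff_hermitian)
  qed
  with herm show "psd C'"
    by (simp add: psd_iff_hermitian)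
qed

lemma psd_deflate_dim_range_less:
  assumes "psd C" and "norm v = 1" and eigen: "C *v v = of_real \<mu> *s v" and "0 < \<mu>"
  shows "dim (range ((*v) (C - rank_one (sqrt \<mu> *\<^sub>R v)))) < dim (range ((*v) C))"
proof (rule dim_psubset)
  let ?C' = "C - rank_one (sqrt \<mu> *\<^sub>R v)"
  have mult: "?C' *v u = C *v (u - cinner v u *s v)" and orth: "cinner v (?C' *v u) = 0" for u
    using psd_deflate[OF assms(1-3)] \<open>0 < \<mu>\<close> by auto
  have "range ((*v) ?C') \<subseteq> range ((*v) C)"
    using mult by auto
  then have "span (range ((*v) ?C')) \<subseteq> span (range ((*v) C))"
    by (rule span_mono)
  moreover have "v \<in> span (range ((*v) C))"
    using \<open>0 < \<mu>\<close>
    by (intro span_base range_eqI[of _ _ "(1 / \<mu>) *\<^sub>R v"])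
      (simp add: matrix_vector_mult_scaleR_complex eigen vec_eq_iff, simp add: scaleR_conv_of_real)
  moreover have "span (range ((*v) ?C')) \<subseteq> {x. cinner v x = 0}"
    using orth by (intro span_minimal) (auto simp: subspace_def cinner_add_right cinner_scaleR_right)
  then have "v \<notin> span (range ((*v) ?C'))"
    using \<open>norm v = 1\<close> by (auto simp: cinner_self)
  ultimately show "span (range ((*v) ?C')) \<subset> span (range ((*v) C))"
    by blast
qed

lemma quad_form_sum: "quad_form (\<Sum>k\<in>K. M k) v = (\<Sum>k\<in>K. quad_form (M k) v)"
  by (induction K rule: infinite_finite_induct) (simp_all add: quad_form_zero quad_form_add)

lemma quad_form_rank_one_sum_eq_0_imp_orthogonal:
  fixes m :: nat
  assumes "quad_form (\<Sum>k<m. rank_one (w k)) v = 0" and "k < m"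
  shows "cinner v (w k) = 0"
proof -
  have "of_real (\<Sum>k<m. (cmod (cinner v (w k)))\<^sup>2) = (0::complex)"
    using assms(1) by (simp add: quad_form_sum quad_form_rank_one)
  then have "(\<Sum>k<m. (cmod (cinner v (w k)))\<^sup>2) = 0"
    by (simp only: of_real_eq_0_iff)
  then show ?thesis
    using assms(2) by (simp add: sum_nonneg_eq_0_iff)
qed

lemma psd_orthogonal_rank_one_decomposition:
  fixes C :: "complex^'n::finite^'n"
  assumes "psd C"
  shows "\<exists>(m::nat) w. C = (\<Sum>k<m. rank_one (w k)) \<and>
           (\<forall>k<m. \<forall>l<m. k \<noteq> l \<longrightarrow> cinner (w k) (w l) = 0)"
  using assms
proof (induction "dim (range ((*v) C))" arbitrary: C rule: less_induct)
  case less
  show ?case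
  proof (cases "C = 0")
    case True
    then show ?thesis by (intro exI[of _ 0]) simp
  next
    case False
    obtain v \<mu> where v: "norm v = 1" and "0 < \<mu>" and eigen: "C *v v = of_real \<mu> *s v"
      using psd_nonzero_has_pos_eigenvector[OF less.prems False] by blast
    define C' where "C' = C - rank_one (sqrt \<mu> *\<^sub>R v)"
    have range_orth: "\<And>u. cinner v (C' *v u) = 0" and "psd C'"
      using psd_deflate[OF less.prems v eigen] \<open>0 < \<mu>\<close> by (simp_all add: C'_def)
    have "dim (range ((*v) C')) < dim (range ((*v) C))"
      unfolding C'_def by (rule psd_deflate_dim_range_less[OF less.prems v eigen \<open>0 < \<mu>\<close>])
    from less.hyps[OF this \<open>psd C'\<close>] obtain m :: nat and w where C': "C' = (\<Sum>k<m. rank_one (w k))"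
      and orth: "\<forall>k<m. \<forall>l<m. k \<noteq> l \<longrightarrow> cinner (w k) (w l) = 0"
      by blast
    have "quad_form (\<Sum>k<m. rank_one (w k)) v = 0"
      using range_orth[of v] by (simp add: quad_form_cinner C')
    then have v_orth: "cinner v (w k) = 0" if "k < m" for k
      using that by (rule quad_form_rank_one_sum_eq_0_imp_orthogonal)
    define w' where "w' = w(m := sqrt \<mu> *\<^sub>R v)"
    show ?thesis
    proof (intro exI conjI allI impI)
      have "(\<Sum>k<Suc m. rank_one (w' k)) = C' + rank_one (sqrt \<mu> *\<^sub>R v)"
        by (simp add: w'_def C')
      then show "C = (\<Sum>k<Suc m. rank_one (w' k))"
        by (simp add: C'_def)
    next
      fix k l assume "k < Suc m" "l < Suc m" "k \<noteq> l"
      then show "cinner (w' k) (w' l) = 0"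
        using orth v_orth
        by (auto simp: w'_def less_Suc_eq cinner_scaleR_left cinner_scaleR_right
            cinner_commute[of _ v])
    qed
  qed
qed

subsection \<open>The Schur product theorem and the lower bound for I(2,A)\<close>

lemma sum_swap_pairs:
  "(\<Sum>i\<in>I. \<Sum>j\<in>J. \<Sum>k\<in>K. \<Sum>l\<in>L. F i j k l) = (\<Sum>k\<in>K. \<Sum>l\<in>L. \<Sum>i\<in>I. \<Sum>j\<in>J. F i j k l)"
proof -
  have "(\<Sum>i\<in>I. \<Sum>j\<in>J. \<Sum>k\<in>K. \<Sum>l\<in>L. F i j k l) = (\<Sum>i\<in>I. \<Sum>k\<in>K. \<Sum>j\<in>J. \<Sum>l\<in>L. F i j k l)"
    by (intro sum.cong refl sum.swap)
  also have "\<dots> = (\<Sum>i\<in>I. \<Sum>k\<in>K. \<Sum>l\<in>L. \<Sum>j\<in>J. F i j k l)"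
    by (intro sum.cong refl sum.swap)
  also have "\<dots> = (\<Sum>k\<in>K. \<Sum>i\<in>I. \<Sum>l\<in>L. \<Sum>j\<in>J. F i j k l)"
    by (rule sum.swap)
  also have "\<dots> = (\<Sum>k\<in>K. \<Sum>l\<in>L. \<Sum>i\<in>I. \<Sum>j\<in>J. F i j k l)"
    by (intro sum.cong refl sum.swap)
  finally show ?thesis .
qed

lemma weighted_sum_cmod_sq_rank_one_sum:
  fixes m :: nat
  assumes "C = (\<Sum>k<m. rank_one (w k))"
  shows "(\<Sum>i\<in>UNIV. \<Sum>j\<in>UNIV. \<beta>$i$j * of_real ((cmod (C$i$j))\<^sup>2))
       = (\<Sum>k<m. \<Sum>l<m. quad_form \<beta> (\<chi> i. cnj (w k$i) * w l$i))"
proof -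
  have "of_real ((cmod (C$i$j))\<^sup>2) = (\<Sum>k<m. \<Sum>l<m. w k$i * cnj (w l$i) * (cnj (w k$j) * w l$j))"
    for i j
  proof -
    have C: "C$i$j = (\<Sum>k<m. w k$i * cnj (w k$j))"
      by (simp add: assms sum_component rank_one_def)
    show ?thesis
      unfolding complex_norm_square C cnj_sum sum_product by (intro sum.cong refl) (simp add: mult_ac)
  qed
  then have "(\<Sum>i\<in>UNIV. \<Sum>j\<in>UNIV. \<beta>$i$j * of_real ((cmod (C$i$j))\<^sup>2))
      = (\<Sum>i\<in>UNIV. \<Sum>j\<in>UNIV. \<Sum>k<m. \<Sum>l<m. \<beta>$i$j * (w k$i * cnj (w l$i) * (cnj (w k$j) * w l$j)))"
    by (simp add: sum_distrib_left)
  also have "\<dots> = (\<Sum>k<m. \<Sum>l<m. \<Sum>i\<in>UNIV. \<Sum>j\<in>UNIV. \<beta>$i$j * (w k$i * cnj (w l$i) * (cnj (w k$j) * w l$j)))"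
    by (rule sum_swap_pairs)
  finally show ?thesis
    unfolding quad_form_def by (simp add: mult_ac)
qed

lemma hadamard_conj_mat_entry: "hadamard A (conj_mat A) $i$j = of_real ((cmod (A$i$j))\<^sup>2)"
  unfolding hadamard_def conj_mat_def complex_norm_square by simp

lemma psd_hadamard_conj_mat:
  assumes "psd A"
  shows "psd (hadamard A (conj_mat A))"
  unfolding psd_iff_hermitian
proof (intro conjI allI)
  have "cmod (A$j$i) = cmod (A$i$j)" for i j
    using assms unfolding psd_iff_hermitian hermitian_def by (metis complex_mod_cnj)
  then show "hermitian (hadamard A (conj_mat A))"
    by (simp add: hermitian_def hadamard_conj_mat_entry)
next
  fix u :: "complex^'a"
  obtain m :: nat and a where A: "A = (\<Sum>k<m. rank_one (a k))"
    using psd_orthogonal_rank_one_decomposition[OF assms] by blast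
  let ?u = "\<chi> i. cnj (u$i)"
  have "quad_form (hadamard A (conj_mat A)) u
      = (\<Sum>i\<in>UNIV. \<Sum>j\<in>UNIV. rank_one ?u $i$j * of_real ((cmod (A$i$j))\<^sup>2))"
    unfolding quad_form_def hadamard_conj_mat_entry rank_one_def by (simp add: mult_ac)
  also have "\<dots> = of_real (\<Sum>k<m. \<Sum>l<m. (cmod (cinner (\<chi> i. cnj (a k$i) * a l$i) ?u))\<^sup>2)"
    unfolding weighted_sum_cmod_sq_rank_one_sum[OF A] quad_form_rank_one by simp
  finally show "0 \<le> Re (quad_form (hadamard A (conj_mat A)) u)"
    by (simp add: sum_nonneg)
qed

lemma frob_power2: "(frob M)\<^sup>2 = (\<Sum>i\<in>UNIV. \<Sum>j\<in>UNIV. (cmod (M$i$j))\<^sup>2)"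
  unfolding frob_def by (simp add: sum_nonneg)

lemma frob_nonneg: "0 \<le> frob M"
  unfolding frob_def by (simp add: sum_nonneg)

definition quartic_form :: "complex^'n::finite^'n \<Rightarrow> real^'n \<Rightarrow> real" where
  "quartic_form A x = (\<Sum>i\<in>UNIV. \<Sum>j\<in>UNIV. (cmod (A$i$j))\<^sup>2 * (x$i)\<^sup>2 * (x$j)\<^sup>2)"

lemma frob_hadamard_outer: "frob (hadamard A (outer x)) = sqrt (quartic_form A x)"
  unfolding frob_def quartic_form_def
  by (simp add: hadamard_def outer_def norm_mult power_mult_distrib mult.assoc)

lemma quartic_form_scaleR: "quartic_form A (r *\<^sub>R x) = r ^ 4 * quartic_form A x"
  unfolding quartic_form_def sum_distrib_left
  by (intro sum.cong refl) (simp add: power_mult_distrib mult_ac flip: power_mult)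

lemma quartic_form_ge_min:
  assumes "\<And>y. norm y = 1 \<Longrightarrow> \<mu> \<le> quartic_form A y"
  shows "\<mu> * (norm x) ^ 4 \<le> quartic_form A x"
proof (cases "x = 0")
  case False
  have "\<mu> \<le> quartic_form A ((1 / norm x) *\<^sub>R x)"
    using False by (intro assms) simp
  with False show ?thesis
    by (simp add: quartic_form_scaleR power_one_over field_simps)
qed (simp add: quartic_form_def)

lemma quad_form_hadamard_conj_mat_moduli:
  "quad_form (hadamard A (conj_mat A)) (\<chi> i. cnj (w$i) * w$i) = of_real (quartic_form A (\<chi> i. cmod (w$i)))"
proof -
  have "cnj (w$i) * w$i = of_real ((cmod (w$i))\<^sup>2)" for i
    by (simp add: mult.commute flip: complex_norm_square)
  then show ?thesis
    unfolding quad_form_def quartic_form_def hadamard_conj_mat_entry vec_lambda_beta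
    by (simp add: mult_ac)
qed

lemma sum_cmod_cinner_sq_orthogonal:
  fixes m :: nat
  assumes "\<forall>k<m. \<forall>l<m. k \<noteq> l \<longrightarrow> cinner (w k) (w l) = 0"
  shows "(\<Sum>k<m. \<Sum>l<m. (cmod (cinner (w l) (w k)))\<^sup>2) = (\<Sum>k<m. (norm (w k)) ^ 4)"
proof (intro sum.cong refl)
  fix k assume "k \<in> {..<m}"
  then have "(\<Sum>l<m. (cmod (cinner (w l) (w k)))\<^sup>2) = (\<Sum>l<m. if l = k then (norm (w k)) ^ 4 else 0)"
    using assms by (intro sum.cong refl) (auto simp: cinner_self norm_power simp flip: power_mult)
  then show "(\<Sum>l<m. (cmod (cinner (w l) (w k)))\<^sup>2) = (norm (w k)) ^ 4"
    using \<open>k \<in> {..<m}\<close> by simp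
qed

lemma frob_hadamard_ge_min_quartic:
  assumes "psd A" and "psd C" and min: "\<And>y. norm y = 1 \<Longrightarrow> \<mu> \<le> quartic_form A y"
  shows "\<mu> * (frob C)\<^sup>2 \<le> (frob (hadamard A C))\<^sup>2"
proof -
  obtain m :: nat and w where C: "C = (\<Sum>k<m. rank_one (w k))"
    and orth: "\<forall>k<m. \<forall>l<m. k \<noteq> l \<longrightarrow> cinner (w k) (w l) = 0"
    using psd_orthogonal_rank_one_decomposition[OF assms(2)] by blast
  let ?B = "hadamard A (conj_mat A)"
  define Q where "Q k l = Re (quad_form ?B (\<chi> i. cnj (w k$i) * w l$i))" for k l
  have "(frob (hadamard A C))\<^sup>2 = Re (\<Sum>i\<in>UNIV. \<Sum>j\<in>UNIV. ?B$i$j * of_real ((cmod (C$i$j))\<^sup>2))"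
    unfolding frob_power2 hadamard_conj_mat_entry
    by (simp add: Re_sum hadamard_def norm_mult power_mult_distrib)
  also have "\<dots> = (\<Sum>k<m. \<Sum>l<m. Q k l)"
    unfolding weighted_sum_cmod_sq_rank_one_sum[OF C] Q_def by (simp add: Re_sum)
  finally have hadamard_C: "(frob (hadamard A C))\<^sup>2 = (\<Sum>k<m. \<Sum>l<m. Q k l)" .
  let ?one = "\<chi> i. (1::complex)"
  have "(frob C)\<^sup>2 = Re (\<Sum>i\<in>UNIV. \<Sum>j\<in>UNIV. rank_one ?one $i$j * of_real ((cmod (C$i$j))\<^sup>2))"
    by (simp add: frob_power2 rank_one_def)
  also have "\<dots> = (\<Sum>k<m. \<Sum>l<m. (cmod (cinner (w l) (w k)))\<^sup>2)"
    unfolding weighted_sum_cmod_sq_rank_one_sum[OF C] quad_form_rank_one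
    by (simp add: cinner_def mult.commute)
  finally have frob_C: "(frob C)\<^sup>2 = (\<Sum>k<m. (norm (w k)) ^ 4)"
    using sum_cmod_cinner_sq_orthogonal[OF orth] by simp
  have "\<mu> * (norm (w k)) ^ 4 \<le> Q k k" for k
    using quartic_form_ge_min[OF min, of "\<chi> i. cmod (w k$i)"]
    by (simp add: Q_def quad_form_hadamard_conj_mat_moduli norm_vec_of_norms)
  then have "\<mu> * (frob C)\<^sup>2 \<le> (\<Sum>k<m. Q k k)"
    by (simp add: frob_C sum_distrib_left sum_mono)
  also have "\<dots> \<le> (\<Sum>k<m. \<Sum>l<m. Q k l)"
    using psd_hadamard_conj_mat[OF assms(1)]
    by (intro sum_mono member_le_sum) (auto simp: Q_def psd_iff_hermitian)
  finally show ?thesis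
    by (simp add: hadamard_C)
qed

lemma psd_rank_one: "psd (rank_one w)"
  by (simp add: psd_iff_hermitian hermitian_rank_one quad_form_rank_one)

lemma outer_eq_rank_one: "outer x = rank_one (\<chi> i. of_real (x$i))"
  by (simp add: outer_def rank_one_def vec_eq_iff)

lemma psd_outer: "psd (outer x)"
  by (simp add: outer_eq_rank_one psd_rank_one)

lemma frob_outer: "frob (outer x) = (norm x)\<^sup>2"
proof -
  have "(frob (outer x))\<^sup>2 = (\<Sum>i\<in>UNIV. (x$i)\<^sup>2) * (\<Sum>j\<in>UNIV. (x$j)\<^sup>2)"
    by (simp add: frob_power2 outer_def sum_product norm_mult power_mult_distrib)
  also have "\<dots> = ((norm x)\<^sup>2)\<^sup>2"
    unfolding norm_vec_power2 by (simp add: power2_eq_square)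
  finally show ?thesis
    by (rule power2_eq_imp_eq) (simp_all add: frob_nonneg)
qed

lemma I2_le_frob_hadamard_outer:
  assumes "norm y = 1"
  shows "I2 A \<le> frob (hadamard A (outer y))"
  unfolding I2_def
proof (rule cInf_lower)
  have "psd (outer y) \<and> frob (outer y) = 1"
    using assms by (simp add: psd_outer frob_outer)
  then show "frob (hadamard A (outer y)) \<in> {frob (hadamard A C) |C. psd C \<and> frob C = 1}"
    by blast
  show "bdd_below {frob (hadamard A C) |C. psd C \<and> frob C = 1}"
    by (rule bdd_belowI[of _ 0]) (auto simp: frob_nonneg)
qed

lemma sqrt_min_quartic_le_I2:
  assumes "psd A" and min: "\<And>y. norm y = 1 \<Longrightarrow> \<mu> \<le> quartic_form A y"
  shows "sqrt \<mu> \<le> I2 A"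
  unfolding I2_def
proof (rule cInf_greatest)
  have "psd (outer (axis undefined 1 :: real^'a)) \<and> frob (outer (axis undefined 1 :: real^'a)) = 1"
    by (simp add: psd_outer frob_outer)
  then show "{frob (hadamard A C) |C. psd C \<and> frob C = 1} \<noteq> {}"
    by blast
  fix s assume "s \<in> {frob (hadamard A C) |C. psd C \<and> frob C = 1}"
  then obtain C where "psd C" "frob C = 1" "s = frob (hadamard A C)"
    by blast
  then have "\<mu> \<le> s\<^sup>2"
    using frob_hadamard_ge_min_quartic[OF assms(1) _ min] by fastforce
  then have "sqrt \<mu> \<le> sqrt (s\<^sup>2)"
    by (rule real_sqrt_le_mono)
  then show "sqrt \<mu> \<le> s"
    using \<open>s = _\<close> frob_nonneg[of "hadamard A C"] by simp
qed

lemma quartic_form_abs: "quartic_form A (\<chi> i. \<bar>x$i\<bar>) = quartic_form A x"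
  by (simp add: quartic_form_def)

lemma quartic_form_attains_nonneg_min:
  obtains x where "\<forall>i. 0 \<le> x$i" "norm x = 1" "\<And>y. norm y = 1 \<Longrightarrow> quartic_form A x \<le> quartic_form A y"
proof -
  have cont: "continuous_on (sphere 0 1) (quartic_form A)"
    unfolding quartic_form_def by (intro continuous_intros)
  obtain x0 where "x0 \<in> sphere 0 1"
    and min: "\<And>y. y \<in> sphere 0 1 \<Longrightarrow> quartic_form A x0 \<le> quartic_form A y"
    using continuous_attains_inf[OF compact_sphere _ cont] by auto
  moreover have "norm (\<chi> i. \<bar>x0$i\<bar>) = norm x0"
    using norm_vec_of_norms[of x0] by simp
  ultimately show ?thesis
    by (intro that[of "\<chi> i. \<bar>x0$i\<bar>"]) (simp_all add: quartic_form_abs)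
qed

lemma quartic_form_min_imp_I2_eq:
  assumes "psd A" and "norm x = 1" and "\<And>y. norm y = 1 \<Longrightarrow> quartic_form A x \<le> quartic_form A y"
  shows "frob (hadamard A (outer x)) = I2 A"
  using I2_le_frob_hadamard_outer[OF assms(2), of A] sqrt_min_quartic_le_I2[OF assms(1,3)]
  by (simp add: frob_hadamard_outer)

lemma I2_eq_imp_quartic_form_min:
  assumes "frob (hadamard A (outer x)) = I2 A" and "norm y = 1"
  shows "quartic_form A x \<le> quartic_form A y"
proof -
  have "sqrt (quartic_form A x) \<le> sqrt (quartic_form A y)"
    using I2_le_frob_hadamard_outer[OF assms(2), of A] assms(1) by (simp add: frob_hadamard_outer)
  then show ?thesis
    by simp
qed

subsection \<open>Minimisers of the quartic form\<close>

lemma sum_symmetric_quadratic_shift: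
  fixes b :: "'a \<Rightarrow> 'a \<Rightarrow> real"
  assumes "\<And>k l. b k l = b l k"
  shows "(\<Sum>k\<in>K. \<Sum>l\<in>K. b k l * (z k + t * d k) * (z l + t * d l))
       = (\<Sum>k\<in>K. \<Sum>l\<in>K. b k l * z k * z l) + 2 * t * (\<Sum>k\<in>K. d k * (\<Sum>l\<in>K. b k l * z l))
         + t\<^sup>2 * (\<Sum>k\<in>K. \<Sum>l\<in>K. b k l * d k * d l)"
proof -
  have "(\<Sum>k\<in>K. \<Sum>l\<in>K. b k l * z k * d l) = (\<Sum>l\<in>K. \<Sum>k\<in>K. b k l * z k * d l)"
    by (rule sum.swap)
  also have "\<dots> = (\<Sum>k\<in>K. d k * (\<Sum>l\<in>K. b k l * z l))"
    by (simp add: sum_distrib_left assms[of _ "_"] mult_ac)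
  finally have cross: "(\<Sum>k\<in>K. \<Sum>l\<in>K. b k l * z k * d l) = (\<Sum>k\<in>K. d k * (\<Sum>l\<in>K. b k l * z l))" .
  have "(\<Sum>k\<in>K. \<Sum>l\<in>K. b k l * (z k + t * d k) * (z l + t * d l))
      = (\<Sum>k\<in>K. \<Sum>l\<in>K. b k l * z k * z l) + t * (\<Sum>k\<in>K. \<Sum>l\<in>K. b k l * d k * z l)
        + t * (\<Sum>k\<in>K. \<Sum>l\<in>K. b k l * z k * d l) + t\<^sup>2 * (\<Sum>k\<in>K. \<Sum>l\<in>K. b k l * d k * d l)"
    by (simp add: sum.distrib sum_distrib_left algebra_simps power2_eq_square)
  also have "(\<Sum>k\<in>K. \<Sum>l\<in>K. b k l * d k * z l) = (\<Sum>k\<in>K. d k * (\<Sum>l\<in>K. b k l * z l))"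
    by (simp add: sum_distrib_left mult_ac)
  finally show ?thesis
    unfolding cross by simp
qed

lemma quartic_form_transfer:
  fixes A :: "complex^'n::finite^'n" and x :: "real^'n"
  assumes "hermitian A" and "\<And>k. 0 \<le> (x$k)\<^sup>2 + t * d k"
  shows "quartic_form A (\<chi> k. sqrt ((x$k)\<^sup>2 + t * d k))
       = quartic_form A x + 2 * t * (\<Sum>k\<in>UNIV. d k * (\<Sum>l\<in>UNIV. (cmod (A$k$l))\<^sup>2 * (x$l)\<^sup>2))
         + t\<^sup>2 * (\<Sum>k\<in>UNIV. \<Sum>l\<in>UNIV. (cmod (A$k$l))\<^sup>2 * d k * d l)"
proof -
  have sym: "(cmod (A$k$l))\<^sup>2 = (cmod (A$l$k))\<^sup>2" for k l
    using assms(1) unfolding hermitian_def by (metis complex_mod_cnj)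
  show ?thesis
    unfolding quartic_form_def
    by (rule trans[OF _ sum_symmetric_quadratic_shift[OF sym]]) (simp add: assms(2))
qed

lemma quartic_form_min_row_sums_eq:
  fixes A :: "complex^'n::finite^'n" and x :: "real^'n"
  assumes "hermitian A" and "norm x = 1"
    and min: "\<And>y. norm y = 1 \<Longrightarrow> quartic_form A x \<le> quartic_form A y"
    and "x$i \<noteq> 0" and "x$j \<noteq> 0"
  shows "(\<Sum>l\<in>UNIV. (cmod (A$i$l))\<^sup>2 * (x$l)\<^sup>2) = (\<Sum>l\<in>UNIV. (cmod (A$j$l))\<^sup>2 * (x$l)\<^sup>2)"
proof (cases "i = j")
  case False
  define r where "r k = (\<Sum>l\<in>UNIV. (cmod (A$k$l))\<^sup>2 * (x$l)\<^sup>2)" for k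
  define d :: "'n \<Rightarrow> real" where "d k = of_bool (k = i) - of_bool (k = j)" for k
  define K where "K = (\<Sum>k\<in>UNIV. \<Sum>l\<in>UNIV. (cmod (A$k$l))\<^sup>2 * d k * d l)"
  have sum_d: "(\<Sum>k\<in>UNIV. d k * f k) = f i - f j" for f
    by (simp add: d_def left_diff_distrib sum_subtractf)
  have sum_x: "(\<Sum>k\<in>UNIV. (x$k)\<^sup>2) = 1"
    using assms(2) norm_vec_power2[of x] by simp
  define e where "e = min ((x$i)\<^sup>2) ((x$j)\<^sup>2)"
  have "0 < e"
    using assms(4,5) by (simp add: e_def)
  have "0 \<le> (2 * (r i - r j)) * t + K * t\<^sup>2" if "\<bar>t\<bar> < e" for t
  proof -
    have nonneg: "0 \<le> (x$k)\<^sup>2 + t * d k" for k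
      using that False by (auto simp: d_def e_def)
    define y where "y = (\<chi> k. sqrt ((x$k)\<^sup>2 + t * d k))"
    have "(norm y)\<^sup>2 = 1"
      using nonneg sum_d[of "\<lambda>_. 1"] sum_x
      by (simp add: y_def norm_vec_power2 sum.distrib sum_distrib_left[symmetric] mult.commute)
    then have "quartic_form A x \<le> quartic_form A y"
      using norm_ge_zero[of y] by (intro min) (simp add: power2_eq_1_iff)
    then show ?thesis
      unfolding y_def quartic_form_transfer[OF assms(1) nonneg] sum_d
      by (simp add: r_def K_def mult_ac)
  qed
  then have "2 * (r i - r j) = 0"
    using quadratic_nonneg_near_0_imp_linear_coeff_0[OF \<open>0 < e\<close>] by blast
  then show ?thesis
    by (simp add: r_def)
qed simp

lemma quad_form_restrict:
  "quad_form M (\<chi> i. if i \<in> J then v$i else 0) = (\<Sum>i\<in>J. \<Sum>j\<in>J. cnj (v$i) * M$i$j * v$j)"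
proof -
  have "quad_form M (\<chi> i. if i \<in> J then v$i else 0)
      = (\<Sum>i\<in>UNIV. of_bool (i \<in> J) * (\<Sum>j\<in>UNIV. of_bool (j \<in> J) * (cnj (v$i) * M$i$j * v$j)))"
    unfolding quad_form_def sum_distrib_left by (intro sum.cong refl) auto
  then show ?thesis
    by (simp add: Int_def)
qed

lemma quad_form_diff: "quad_form (M - N) v = quad_form M v - quad_form N v"
  by (simp add: quad_form_def left_diff_distrib right_diff_distrib sum_subtractf)

lemma quad_form_scaleR_matrix: "quad_form (r *\<^sub>R M) v = of_real r * quad_form M v"
  unfolding quad_form_def vector_scaleR_component
  by (simp add: sum_distrib_left scaleR_conv_of_real mult_ac)

lemma quad_form_minus_const:
  "quad_form (\<chi> i j. M$i$j - of_real l) u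
     = quad_form M u - of_real l * ((\<Sum>k\<in>UNIV. u$k) * cnj (\<Sum>k\<in>UNIV. u$k))"
proof -
  have shift: "(\<chi> i j. M$i$j - of_real l) = M - l *\<^sub>R rank_one (\<chi> i. 1)"
    by (simp add: vec_eq_iff rank_one_def of_real_def)
  have inner_one: "cinner u (\<chi> i. 1) = cnj (\<Sum>k\<in>UNIV. u$k)"
    by (simp add: cinner_def cnj_sum)
  show ?thesis
    unfolding shift quad_form_diff quad_form_scaleR_matrix quad_form_rank_one complex_norm_square
      inner_one
    by (simp add: mult.commute)
qed

lemma cinner_mult_vec_constant_on_support:
  assumes "\<And>k. k \<notin> J \<Longrightarrow> u$k = 0" and "\<And>k. k \<in> J \<Longrightarrow> (M *v z)$k = of_real c"
  shows "cinner u (M *v z) = of_real c * cnj (\<Sum>k\<in>UNIV. u$k)"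
  unfolding cinner_def cnj_sum sum_distrib_left
proof (intro sum.cong refl)
  fix k show "cnj (u$k) * (M *v z)$k = of_real c * cnj (u$k)"
    by (cases "k \<in> J") (simp_all add: assms mult.commute)
qed

lemma psd_on_minus_constant_on_support:
  assumes "psd B" and supp: "\<And>k. k \<notin> J \<Longrightarrow> z$k = 0" and sum_z: "(\<Sum>k\<in>UNIV. z$k) = 1"
    and const: "\<And>k. k \<in> J \<Longrightarrow> (B *v z)$k = of_real c"
  shows "psd_on J (\<chi> i j. B$i$j - of_real c)"
proof -
  have herm: "hermitian B" and nonneg: "\<And>u. 0 \<le> Re (quad_form B u)"
    using assms(1) by (auto simp: psd_iff_hermitian)
  have "(\<chi> i j. B$i$j - of_real c)$j$i = cnj ((\<chi> i j. B$i$j - of_real c)$i$j)" for i j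
  proof -
    have "B$j$i = cnj (B$i$j)"
      using herm unfolding hermitian_def by blast
    then show ?thesis
      by simp
  qed
  moreover have "0 \<le> Re (\<Sum>i\<in>J. \<Sum>j\<in>J. cnj (v$i) * (\<chi> i j. B$i$j - of_real c)$i$j * v$j)" for v
  proof -
    define w where "w = (\<chi> i. if i \<in> J then v$i else 0)"
    define S where "S = (\<Sum>k\<in>UNIV. w$k)"
    have w_supp: "\<And>k. k \<notin> J \<Longrightarrow> w$k = 0"
      by (simp add: w_def)
    note Bz = cinner_mult_vec_constant_on_support[OF _ const]
    have "cinner z (B *v w) = of_real c * S"
      using hermitian_cinner_adjoint[OF herm, of z w] cinner_commute[of "B *v z" w] Bz[OF w_supp]
      by (simp add: S_def)
    then have "quad_form B (w - S *s z) = quad_form B w - of_real c * (S * cnj S)"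
      using Bz[OF w_supp] Bz[OF supp] sum_z
      by (simp add: quad_form_cinner matrix_vector_mult_diff_distrib matrix_vector_mult_scale
          cinner_diff_left cinner_diff_right cinner_scale_left cinner_scale_right S_def algebra_simps)
    then have "quad_form (\<chi> i j. B$i$j - of_real c) w = quad_form B (w - S *s z)"
      by (simp add: quad_form_minus_const S_def)
    then show ?thesis
      using nonneg[of "w - S *s z"] by (simp add: w_def quad_form_restrict)
  qed
  ultimately show ?thesis
    unfolding psd_on_def by blast
qed

lemma Isub_eq_constant_on_support:
  assumes "psd B" and supp: "\<And>k. k \<notin> J \<Longrightarrow> z$k = 0" and sum_z: "(\<Sum>k\<in>UNIV. z$k) = 1"
    and const: "\<And>k. k \<in> J \<Longrightarrow> (B *v z)$k = of_real c"
  shows "Isub J B = c"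
  unfolding Isub_def
proof (rule cSup_eq_maximum)
  have qf_z: "quad_form B z = of_real c"
    using cinner_mult_vec_constant_on_support[OF supp const] sum_z by (simp add: quad_form_cinner)
  then have "0 \<le> c"
    using assms(1) by (metis Re_complex_of_real psd_iff_hermitian)
  with psd_on_minus_constant_on_support[OF assms]
  show "c \<in> {l. 0 \<le> l \<and> psd_on J (\<chi> i j. B$i$j - of_real l)}"
    by simp
  fix l assume "l \<in> {l. 0 \<le> l \<and> psd_on J (\<chi> i j. B$i$j - of_real l)}"
  then have "0 \<le> Re (\<Sum>i\<in>J. \<Sum>j\<in>J. cnj (z$i) * (\<chi> i j. B$i$j - of_real l)$i$j * z$j)"
    unfolding psd_on_def by blast
  moreover have "(\<chi> i. if i \<in> J then z$i else 0) = z"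
    using supp by (auto simp: vec_eq_iff)
  then have "(\<Sum>i\<in>J. \<Sum>j\<in>J. cnj (z$i) * (\<chi> i j. B$i$j - of_real l)$i$j * z$j)
      = quad_form (\<chi> i j. B$i$j - of_real l) z"
    using quad_form_restrict[of "\<chi> i j. B$i$j - of_real l" J z] by simp
  moreover have "quad_form (\<chi> i j. B$i$j - of_real l) z = of_real (c - l)"
    by (simp add: quad_form_minus_const qf_z sum_z)
  ultimately have "0 \<le> Re (complex_of_real (c - l))"
    by (simp only:)
  then show "l \<le> c"
    by simp
qed

lemma quartic_form_min_eigenvector:
  fixes A :: "complex^'n::finite^'n" and x :: "real^'n"
  assumes "psd A" and "norm x = 1"
    and min: "\<And>y. norm y = 1 \<Longrightarrow> quartic_form A x \<le> quartic_form A y"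
  defines "B \<equiv> hadamard A (conj_mat A)"
  shows "hadamard B (outer x) *v (\<chi> i. of_real (x$i))
       = of_real (Isub {i. x$i \<noteq> 0} B) *s (\<chi> i. of_real (x$i))"
proof -
  define r where "r k = (\<Sum>l\<in>UNIV. (cmod (A$k$l))\<^sup>2 * (x$l)\<^sup>2)" for k
  obtain i0 where "x$i0 \<noteq> 0"
    using \<open>norm x = 1\<close> by (metis norm_zero vec_eq_iff zero_index zero_neq_one)
  have "hermitian A"
    using assms(1) by (simp add: psd_iff_hermitian)
  then have r_const: "r k = r i0" if "x$k \<noteq> 0" for k
    using quartic_form_min_row_sums_eq[OF _ assms(2) min that \<open>x$i0 \<noteq> 0\<close>] by (simp add: r_def)
  define z where "z = (\<chi> k. complex_of_real ((x$k)\<^sup>2))"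
  have Bz: "(B *v z)$k = of_real (r k)" for k
    by (simp add: B_def matrix_vector_mult_def hadamard_conj_mat_entry z_def r_def)
  have "Isub {i. x$i \<noteq> 0} B = r i0"
  proof (rule Isub_eq_constant_on_support)
    show "psd B"
      unfolding B_def by (rule psd_hadamard_conj_mat[OF assms(1)])
    have "(\<Sum>k\<in>UNIV. (x$k)\<^sup>2) = 1"
      using \<open>norm x = 1\<close> norm_vec_power2[of x] by simp
    then have "of_real (\<Sum>k\<in>UNIV. (x$k)\<^sup>2) = (1::complex)"
      by simp
    then show "(\<Sum>k\<in>UNIV. z$k) = 1"
      by (simp add: z_def)
  qed (simp add: z_def, simp add: Bz r_const)
  moreover have "(hadamard B (outer x) *v (\<chi> i. of_real (x$i)))$k = of_real (x$k * r k)" for k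
    by (simp add: B_def matrix_vector_mult_def hadamard_def[of "hadamard A (conj_mat A)"]
        hadamard_conj_mat_entry outer_def r_def sum_distrib_left power2_eq_square mult_ac)
  ultimately show ?thesis
    using r_const by (auto simp: vec_eq_iff)
qed

theorem proposition3p2:
  fixes A :: "complex^'n::finite^'n"
  assumes "psd A"
  defines "B \<equiv> hadamard A (conj_mat A)"
  shows "(\<exists>x::real^'n. (\<forall>i. 0 \<le> x$i) \<and> norm x = 1 \<and> frob (hadamard A (outer x)) = I2 A)
    \<and> (\<forall>x::real^'n. (\<forall>i. 0 \<le> x$i) \<and> norm x = 1 \<and> frob (hadamard A (outer x)) = I2 A \<longrightarrow>
         (let J = {i. x$i \<noteq> 0} in
            hadamard B (outer x) *v (\<chi> i. complex_of_real (x$i))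
              = complex_of_real (Isub J B) *s (\<chi> i. complex_of_real (x$i))))"
proof (intro conjI allI impI)
  obtain x :: "real^'n" where "\<forall>i. 0 \<le> x$i" "norm x = 1"
    and "\<And>y. norm y = 1 \<Longrightarrow> quartic_form A x \<le> quartic_form A y"
    using quartic_form_attains_nonneg_min[of A] by blast
  then show "\<exists>x::real^'n. (\<forall>i. 0 \<le> x$i) \<and> norm x = 1 \<and> frob (hadamard A (outer x)) = I2 A"
    using quartic_form_min_imp_I2_eq[OF assms(1)] by blast
next
  fix x :: "real^'n"
  assume "(\<forall>i. 0 \<le> x$i) \<and> norm x = 1 \<and> frob (hadamard A (outer x)) = I2 A"
  then show "let J = {i. x$i \<noteq> 0} in
      hadamard B (outer x) *v (\<chi> i. complex_of_real (x$i))
        = complex_of_real (Isub J B) *s (\<chi> i. complex_of_real (x$i))"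
    unfolding Let_def B_def
    using quartic_form_min_eigenvector[OF assms(1)] I2_eq_imp_quartic_form_min by blast
qed

end
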